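(* For all $x,y\in\mathcal{X}$ and $N\in\mathbb{N}^+$, $$\tilde\alpha_N(x,y)\le\alpha(x,y)\,\mathbb{E}_{Q_{x,N}}\left[W_{x,N}^{-1}\right].$$
   Context: Let $(\mathcal{X},\mathcal{B}(\mathcal{X}))$ be a measurable space, $\pi$ a probability distribution on it with density $\pi(x)$ with respect to a reference measure, and $q$ a Markov proposal kernel. For each $x\in\mathcal{X}$, $N\in\mathbb{N}^+$, $Q_{x,N}$ is a probability distribution on $[0,\infty)$ such that $W_{x,N}\sim Q_{x,N}$ satisfies $W_{x,N}>0$ a.s. and $\mathbb{E}[W_{x,N}]=1$. Define $\alpha(x,y)=\min\{1,\frac{\pi(dy)q(y,dx)}{\pi(dx)q(x,dy)}\}$ and $\tilde\alpha_N(x,y)=\mathbb{E}[\min\{1,\frac{\pi(dy)q(y,dx)}{\pi(dx)q(x,dy)}\frac{W_{y,N}}{W_{x,N}}\}]$ with $W_{x,N}\sim Q_{x,N}$ and $W_{y,N}\sim Q_{y,N}$ independent. *)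

theory Defs
  imports "HOL-Probability.Probability"
begin

text \<open>The acceptance ratio pi(dy)q(y,dx) / (pi(dx)q(x,dy)) is represented abstractly
  by a nonnegative function r :: 'a => 'a => real (a Radon-Nikodym derivative).\<close>

definition mh_alpha :: "('a \<Rightarrow> 'a \<Rightarrow> real) \<Rightarrow> 'a \<Rightarrow> 'a \<Rightarrow> real" where
  "mh_alpha r x y = min 1 (r x y)"

text \<open>Pseudo-marginal acceptance probability, W_x ~ Q x N and W_y ~ Q y N independent
  (expectation under the product measure, written as an iterated integral).\<close>
definition pm_alpha :: "('a \<Rightarrow> 'a \<Rightarrow> real) \<Rightarrow> ('a \<Rightarrow> nat \<Rightarrow> real measure) \<Rightarrow> nat \<Rightarrow> 'a \<Rightarrow> 'a \<Rightarrow> ennreal" where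
  "pm_alpha r Q N x y =
     (\<integral>\<^sup>+ wx. (\<integral>\<^sup>+ wy. ennreal (min 1 (r x y * (wy / wx))) \<partial>(Q y N)) \<partial>(Q x N))"

end

theory Submission
  imports Defs
begin

text \<open>The acceptance probability is at most 1, which settles the case \<open>r x y \<ge> 1\<close> because
  \<open>\<integral>\<^sup>+ 1/W \<ge> 1\<close> when \<open>W > 0\<close> has mean 1 (integrate \<open>1/w + w \<ge> 2\<close>). If \<open>r x y < 1\<close>, drop the
  truncation: \<open>min 1 (r W\<^sub>y/W\<^sub>x) \<le> r W\<^sub>y/W\<^sub>x\<close>, and integrating out \<open>W\<^sub>y\<close>, whose mean is 1,
  leaves \<open>r \<integral>\<^sup>+ 1/W\<^sub>x\<close>.\<close>

lemma nn_integral_ennreal_eq_integral_one: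
  assumes "integrable M (\<lambda>w::real. w)" "AE w in M. 0 < w" "(\<integral>w. w \<partial>M) = 1"
  shows "(\<integral>\<^sup>+ w. ennreal w \<partial>M) = 1"
  using nn_integral_eq_integral[OF assms(1)] assms(2,3)
  by (metis (mono_tags, lifting) eventually_mono less_imp_le ennreal_1)

lemma nn_integral_inverse_ge_one:
  fixes M :: "real measure"
  assumes M: "prob_space M" "sets M = sets borel"
    and pos: "AE w in M. 0 < w" and mean: "(\<integral>\<^sup>+ w. ennreal w \<partial>M) = 1"
  shows "(\<integral>\<^sup>+ w. ennreal (1 / w) \<partial>M) \<ge> 1"
proof -
  let ?I = "\<integral>\<^sup>+ w. ennreal (1 / w) \<partial>M"
  have inv_plus_ge_2: "2 \<le> ennreal (1 / w) + ennreal w" if w: "0 < w" for w :: real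
  proof -
    have "0 \<le> (w - 1)^2 / w" using w by simp
    also have "(w - 1)^2 / w = 1 / w + w - 2" using w
      by (simp add: field_simps power2_eq_square)
    finally have "ennreal 2 \<le> ennreal (1 / w + w)" by (intro ennreal_leI) simp
    then show ?thesis using w by (simp add: ennreal_plus[symmetric] del: ennreal_plus)
  qed
  have "(2::ennreal) = (\<integral>\<^sup>+ w. 2 \<partial>M)"
    using prob_space.emeasure_space_1[OF M(1)] by (simp add: nn_integral_const)
  also have "\<dots> \<le> (\<integral>\<^sup>+ w. ennreal (1 / w) + ennreal w \<partial>M)"
    using pos by (intro nn_integral_mono_AE) (auto elim: eventually_mono intro: inv_plus_ge_2)
  also have "\<dots> = ?I + 1"
    using mean M(2) by (subst nn_integral_add) (auto simp: measurable_cong_sets[OF M(2) refl])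
  finally have "1 + 1 \<le> 1 + ?I" by (simp add: one_add_one add.commute)
  then show ?thesis by (simp only: ennreal_add_left_cancel_le) simp
qed

lemma nn_integral_min_one_le_mean:
  fixes M :: "real measure"
  assumes "sets M = sets borel" "AE w in M. 0 < w" "(\<integral>\<^sup>+ w. ennreal w \<partial>M) = 1" "c \<ge> 0"
  shows "(\<integral>\<^sup>+ w. ennreal (min 1 (c * w)) \<partial>M) \<le> ennreal c"
proof -
  have "(\<integral>\<^sup>+ w. ennreal (min 1 (c * w)) \<partial>M) \<le> (\<integral>\<^sup>+ w. ennreal c * ennreal w \<partial>M)"
    using assms(2,4)
    by (intro nn_integral_mono_AE) (auto elim!: eventually_mono simp: ennreal_mult[symmetric])
  also have "\<dots> = ennreal c"
    using assms(1,3) by (subst nn_integral_cmult) (auto simp: measurable_cong_sets[OF assms(1) refl])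
  finally show ?thesis .
qed

lemma pm_alpha_le_one:
  assumes "\<And>x N. prob_space (Q x N)"
  shows "pm_alpha r Q N x y \<le> 1"
proof -
  have "pm_alpha r Q N x y \<le> (\<integral>\<^sup>+ wx. (\<integral>\<^sup>+ wy. 1 \<partial>Q y N) \<partial>Q x N)"
    unfolding pm_alpha_def by (intro nn_integral_mono) (simp add: ennreal_leI)
  also have "\<dots> = 1"
    using prob_space.emeasure_space_1[OF assms] by (simp add: nn_integral_const)
  finally show ?thesis .
qed

lemma pm_alpha_le_ratio:
  assumes r_nonneg: "r x y \<ge> 0"
    and Q_sets: "\<And>x N. sets (Q x N) = sets borel"
    and Q_pos: "\<And>x N. AE w in Q x N. w > 0"
    and Q_mean: "\<And>x N. (\<integral>\<^sup>+ w. ennreal w \<partial>Q x N) = 1"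
  shows "pm_alpha r Q N x y \<le> ennreal (r x y) * (\<integral>\<^sup>+ w. ennreal (1 / w) \<partial>Q x N)"
proof -
  have inner: "(\<integral>\<^sup>+ wy. ennreal (min 1 (r x y * (wy / wx))) \<partial>Q y N) \<le> ennreal (r x y) * ennreal (1 / wx)"
    if wx: "0 < wx" for wx
    using nn_integral_min_one_le_mean[OF Q_sets Q_pos Q_mean, of "r x y / wx" y N] wx r_nonneg
    by (simp add: mult.commute ennreal_mult[symmetric])
  have "pm_alpha r Q N x y \<le> (\<integral>\<^sup>+ wx. ennreal (r x y) * ennreal (1 / wx) \<partial>Q x N)"
    unfolding pm_alpha_def using Q_pos[of x N] inner
    by (intro nn_integral_mono_AE) (auto elim: eventually_mono)
  also have "\<dots> = ennreal (r x y) * (\<integral>\<^sup>+ w. ennreal (1 / w) \<partial>Q x N)"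
    by (rule nn_integral_cmult) (simp add: measurable_cong_sets[OF Q_sets refl])
  finally show ?thesis .
qed

theorem lemma3p5:
  fixes r :: "'a \<Rightarrow> 'a \<Rightarrow> real" and Q :: "'a \<Rightarrow> nat \<Rightarrow> real measure"
  assumes r_nonneg: "\<And>x y. r x y \<ge> 0"
    and Q_sets: "\<And>x N. sets (Q x N) = sets borel"
    and Q_prob: "\<And>x N. prob_space (Q x N)"
    and Q_pos: "\<And>x N. AE w in Q x N. w > 0"
    and Q_int: "\<And>x N. integrable (Q x N) (\<lambda>w. w)"
    and Q_mean: "\<And>x N. (\<integral>w. w \<partial>Q x N) = 1"
    and N_pos: "N \<ge> 1"
  shows "pm_alpha r Q N x y \<le> ennreal (mh_alpha r x y) * (\<integral>\<^sup>+ w. ennreal (1 / w) \<partial>(Q x N))"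
proof -
  have mean_one: "(\<integral>\<^sup>+ w. ennreal w \<partial>Q z M) = 1" for z M
    using nn_integral_ennreal_eq_integral_one[OF Q_int Q_pos Q_mean] .
  show ?thesis
  proof (cases "r x y \<ge> 1")
    case True
    have "pm_alpha r Q N x y \<le> 1"
      using pm_alpha_le_one[OF Q_prob] .
    also have "\<dots> \<le> (\<integral>\<^sup>+ w. ennreal (1 / w) \<partial>Q x N)"
      using nn_integral_inverse_ge_one[OF Q_prob Q_sets Q_pos mean_one] .
    finally show ?thesis
      using True by (simp add: mh_alpha_def)
  next
    case False
    then show ?thesis
      using pm_alpha_le_ratio[where r = r and Q = Q, OF r_nonneg Q_sets Q_pos mean_one]
      by (simp add: mh_alpha_def)
  qed
qed

end
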